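(* Let $\beta\in(0,\infty)$ and, for each $N\ge1$, let $K=K_N$ be a positive integer with $K_N/N\to\beta$. Let $\boldsymbol{S}\in\mathbb{R}^{N\times K}$ be a random time-hopping matrix with $N_{\mathsf s}=1$: its columns are independent, $\boldsymbol{s}_k=\epsilon_k\boldsymbol{e}_{\pi_k}$ with $\pi_k$ uniform on $\{1,\dots,N\}$ and $\epsilon_k$ uniform on $\{-1,+1\}$, all independent. Let $\lambda_1,\dots,\lambda_N$ be the eigenvalues of $\boldsymbol{S}\boldsymbol{S}^{\mathsf T}$ and let $F_N(x):=\frac1N\sum_{n=1}^N \mathbb{1}\{\lambda_n\le x\}$ be its empirical spectral distribution. Then for every $x\in\mathbb{R}$, as $N\to\infty$, \[ F_N(x)\ \xrightarrow{p}\ F(x):=\sum_{k\ge0}\frac{\beta^k e^{-\beta}}{k!}\,\mathbb{1}\{k\le x\}, \] i.e. the empirical spectral distribution converges in probability to the distribution function of a Poisson law with mean $\beta$.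
   Context: $\boldsymbol{e}_i$ denotes the $i$th standard basis vector of $\mathbb{R}^N$; $\xrightarrow{p}$ denotes convergence in probability. *)

theory Defs
  imports "HOL-Probability.Probability" "Jordan_Normal_Form.Char_Poly"
begin

text \<open>Sample space for the time-hopping matrix with N rows, K columns, N_s = 1:
  an outcome assigns to each column k < K a pair (pi_k, eps_k) with pi_k uniform on the
  row indices {0..<N} (0-based) and eps_k uniform on {-1,+1}; all independent.\<close>
definition th_law :: "nat \<Rightarrow> nat \<Rightarrow> (nat \<Rightarrow> nat \<times> real) pmf" where
  "th_law N K = Pi_pmf {..<K} (0, 1) (\<lambda>k. pmf_of_set ({0..<N} \<times> {-1, 1}))"

definition th_matrix :: "nat \<Rightarrow> nat \<Rightarrow> (nat \<Rightarrow> nat \<times> real) \<Rightarrow> real mat" where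
  "th_matrix N K \<omega> = mat N K (\<lambda>(i, k). if fst (\<omega> k) = i then snd (\<omega> k) else 0)"

definition esd :: "nat \<Rightarrow> real mat \<Rightarrow> real \<Rightarrow> real" where
  "esd N A x = (\<Sum>t\<in>{t. poly (char_poly A) t = 0 \<and> t \<le> x}.
                   real (order t (char_poly A))) / real N"

definition poisson_cdf :: "real \<Rightarrow> real \<Rightarrow> real" where
  "poisson_cdf \<beta> x = (\<Sum>k. if real k \<le> x then \<beta> ^ k * exp (- \<beta>) / fact k else 0)"

end

theory Submission
  imports Defs
begin

(* The Gram matrix S S^T is diagonal, its i-th entry being the number of columns whose nonzero
   entry lies in row i; so F_N(x) is the fraction of rows of degree at most x. One row degree is
   binomial and two distinct row degrees are jointly trinomial with cell probabilities 1/N; as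
   K/N tends to beta these laws tend to one, resp. two independent, Poisson(beta) laws. Hence
   E F_N(x) tends to F(x) and E F_N(x)^2 to F(x)^2, and the second moment method concludes. *)

lemma order_prod_linear_factors:
  fixes xs :: "'a::idom list"
  shows "order t (\<Prod>a\<leftarrow>xs. [:- a, 1:]) = count_list xs t"
proof (induction xs)
  case Nil
  then show ?case by (simp add: order_0I)
next
  case (Cons a xs)
  have "[:- a, 1:] * (\<Prod>a\<leftarrow>xs. [:- a, 1:]) \<noteq> 0"
    using prod_list_zero_iff[of "map (\<lambda>a. [:- a, 1:]) (a # xs)"] by auto
  then have "order t (\<Prod>a\<leftarrow>a # xs. [:- a, 1:]) = order t [:- a, 1:] + order t (\<Prod>a\<leftarrow>xs. [:- a, 1:])"
    by (simp add: order_mult del: pCons_0_as_mult mult_pCons_left)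
  moreover have "order t [:- a, 1:] = (if a = t then 1 else 0)"
    using order_power_n_n[of t 1] by (auto simp: order_0I)
  ultimately show ?case using Cons by simp
qed

lemma poly_prod_linear_factors_eq_0_iff:
  fixes xs :: "'a::idom list"
  shows "poly (\<Prod>a\<leftarrow>xs. [:- a, 1:]) t = 0 \<longleftrightarrow> t \<in> set xs"
  by (induction xs) auto

lemma esd_upper_triangular:
  fixes A :: "real mat"
  assumes "A \<in> carrier_mat N N" and "upper_triangular A"
  shows "esd N A x = (\<Sum>i<N. if A $$ (i, i) \<le> x then 1 else 0) / real N"
proof -
  let ?d = "diag_mat A" and ?le = "\<lambda>t. if t \<le> x then 1 else 0 :: nat"
  have cp: "char_poly A = (\<Prod>a\<leftarrow>?d. [:- a, 1:])"
    by (rule char_poly_upper_triangular[OF assms])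
  have "{t. poly (char_poly A) t = 0 \<and> t \<le> x} = {t \<in> set ?d. t \<le> x}"
    by (auto simp: cp poly_prod_linear_factors_eq_0_iff)
  then have "(\<Sum>t\<in>{t. poly (char_poly A) t = 0 \<and> t \<le> x}. real (order t (char_poly A)))
      = real (\<Sum>t\<in>set ?d. count_list ?d t * ?le t)"
    by (simp add: cp order_prod_linear_factors sum.inter_filter if_distrib cong: if_cong)
  also have "\<dots> = real (sum_list (map ?le ?d))"
    by (simp add: sum_list_map_eq_sum_count)
  also have "\<dots> = real (\<Sum>i<N. ?le (A $$ (i, i)))"
    using assms(1) by (simp add: diag_mat_def sum_list_sum_nth lessThan_atLeast0)
  also have "\<dots> = (\<Sum>i<N. if A $$ (i, i) \<le> x then 1 else 0)"
    by (simp add: of_nat_sum of_bool_def[symmetric])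
  finally show ?thesis
    by (simp add: esd_def)
qed

definition trinomial_prob :: "nat \<Rightarrow> real \<Rightarrow> real \<Rightarrow> nat \<Rightarrow> nat \<Rightarrow> real" where
  "trinomial_prob n u v a b =
     real (n choose a) * real ((n - a) choose b) * u ^ a * v ^ b * (1 - u - v) ^ (n - a - b)"

lemma choose_mult_choose_eq_0: "n < a + b \<Longrightarrow> (n choose a) * ((n - a) choose b) = 0"
  by (cases "a \<le> n") auto

lemma choose_mult_choose_Suc:
  "(Suc n choose a) * ((Suc n - a) choose b) =
     (if a = 0 then 0 else (n choose (a - 1)) * ((n - (a - 1)) choose b))
   + (if b = 0 then 0 else (n choose a) * ((n - a) choose (b - 1)))
   + (n choose a) * ((n - a) choose b)"
proof (cases "a \<le> n")
  case True
  have b: "(Suc (n - a) choose b) = (if b = 0 then 0 else ((n - a) choose (b - 1))) + ((n - a) choose b)"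
    by (cases b) auto
  show ?thesis
  proof (cases a)
    case 0
    then show ?thesis using b by simp
  next
    case (Suc a')
    then have "n - a' = Suc (n - a)" "Suc n - a = Suc (n - a)" using True by auto
    then show ?thesis using Suc b by (simp add: algebra_simps)
  qed
next
  case False
  then consider "a = Suc n" | "Suc n < a" by linarith
  then show ?thesis
    by cases (cases b; simp add: binomial_eq_0)+
qed

lemma trinomial_prob_Suc:
  "trinomial_prob (Suc n) u v a b =
     u * (if a = 0 then 0 else trinomial_prob n u v (a - 1) b)
   + v * (if b = 0 then 0 else trinomial_prob n u v a (b - 1))
   + (1 - u - v) * trinomial_prob n u v a b"
proof -
  define r where "r = 1 - u - v"
  define W where "W = u ^ a * v ^ b * r ^ (Suc n - a - b)"
  have shift_a: "u * (if a = 0 then 0 else trinomial_prob n u v (a - 1) b)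
      = (if a = 0 then 0 else real ((n choose (a - 1)) * ((n - (a - 1)) choose b))) * W"
  proof (cases "a = 0 \<or> n < a - 1 + b")
    case True
    then show ?thesis
      using choose_mult_choose_eq_0[of n "a - 1" b] by (auto simp: trinomial_prob_def)
  next
    case False
    then have "n - (a - 1) - b = Suc n - a - b" "u * u ^ (a - 1) = u ^ a"
      by (auto simp flip: power_Suc)
    then show ?thesis
      using False by (simp add: trinomial_prob_def W_def r_def)
  qed
  have shift_b: "v * (if b = 0 then 0 else trinomial_prob n u v a (b - 1))
      = (if b = 0 then 0 else real ((n choose a) * ((n - a) choose (b - 1)))) * W"
  proof (cases "b = 0 \<or> n < a + (b - 1)")
    case True
    then show ?thesis
      using choose_mult_choose_eq_0[of n a "b - 1"] by (auto simp: trinomial_prob_def)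
  next
    case False
    then have "n - a - (b - 1) = Suc n - a - b" "v * v ^ (b - 1) = v ^ b"
      by (auto simp flip: power_Suc)
    then show ?thesis
      using False by (simp add: trinomial_prob_def W_def r_def)
  qed
  have shift_r: "r * trinomial_prob n u v a b = real ((n choose a) * ((n - a) choose b)) * W"
  proof (cases "n < a + b")
    case True
    then show ?thesis
      using choose_mult_choose_eq_0[of n a b] by (auto simp: trinomial_prob_def)
  next
    case False
    then have "Suc n - a - b = Suc (n - a - b)" by simp
    then show ?thesis by (simp add: trinomial_prob_def W_def r_def)
  qed
  have "trinomial_prob (Suc n) u v a b = real ((Suc n choose a) * ((Suc n - a) choose b)) * W"
    by (simp add: trinomial_prob_def W_def r_def)
  also have "\<dots> = u * (if a = 0 then 0 else trinomial_prob n u v (a - 1) b)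
      + v * (if b = 0 then 0 else trinomial_prob n u v a (b - 1)) + r * trinomial_prob n u v a b"
    unfolding shift_a shift_b shift_r choose_mult_choose_Suc by (simp add: algebra_simps)
  finally show ?thesis unfolding r_def .
qed

lemma measure_bind_pmf:
  "measure_pmf.prob (bind_pmf M N) X = (\<integral>x. measure_pmf.prob (N x) X \<partial>M)"
proof -
  have "measure_pmf.prob (bind_pmf M N) X = pmf (map_pmf (\<lambda>z. z \<in> X) (bind_pmf M N)) True"
    by (simp add: pmf_map vimage_def)
  also have "\<dots> = (\<integral>x. pmf (map_pmf (\<lambda>z. z \<in> X) (N x)) True \<partial>M)"
    by (simp add: map_bind_pmf pmf_bind)
  also have "\<dots> = (\<integral>x. measure_pmf.prob (N x) X \<partial>M)"
    by (simp add: pmf_map vimage_def)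
  finally show ?thesis .
qed

lemma measure_Pi_pmf_insert:
  assumes "finite A" "x \<notin> A"
  shows "measure_pmf.prob (Pi_pmf (insert x A) d P) E =
         (\<integral>y. measure_pmf.prob (Pi_pmf A d P) {f. f(x := y) \<in> E} \<partial>P x)"
  unfolding Pi_pmf_insert'[OF assms] measure_bind_pmf map_pmf_def[symmetric] measure_map_pmf vimage_def
  by (rule refl)

lemma integral_pmf_three_valued:
  fixes P :: "'a pmf"
  assumes "U \<inter> V = {}"
  shows "(\<integral>y. (if y \<in> U then c1 else if y \<in> V then c2 else c3) \<partial>P) =
    c1 * measure_pmf.prob P U + c2 * measure_pmf.prob P V
    + c3 * (1 - measure_pmf.prob P U - measure_pmf.prob P V)"
proof -
  have "(\<lambda>y. if y \<in> U then c1 else if y \<in> V then c2 else c3) =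
        (\<lambda>y. c3 + ((c1 - c3) * indicator U y + (c2 - c3) * indicator V y))"
    using assms by (auto simp: indicator_def fun_eq_iff)
  moreover have "integrable (measure_pmf P) (indicator S :: 'a \<Rightarrow> real)" for S
    by (rule measure_pmf.integrable_const_bound[where B = 1]) (auto simp: indicator_def)
  ultimately show ?thesis
    by (simp add: algebra_simps)
qed

lemma card_fun_upd_in:
  assumes "finite A" "x \<notin> A"
  shows "card {k \<in> insert x A. (f(x := y)) k \<in> U} = of_bool (y \<in> U) + card {k \<in> A. f k \<in> U}"
proof -
  have "{k \<in> insert x A. (f(x := y)) k \<in> U} =
      (if y \<in> U then insert x {k \<in> A. f k \<in> U} else {k \<in> A. f k \<in> U})"
    using assms by auto
  then show ?thesis using assms by auto
qed

lemma prob_Pi_pmf_cell_counts: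
  fixes P :: "'b pmf" and A :: "'a set"
  assumes "finite A" "U \<inter> V = {}"
  shows "measure_pmf.prob (Pi_pmf A d (\<lambda>_. P))
           {f. card {k \<in> A. f k \<in> U} = a \<and> card {k \<in> A. f k \<in> V} = b}
       = trinomial_prob (card A) (measure_pmf.prob P U) (measure_pmf.prob P V) a b"
  using assms(1)
proof (induction A arbitrary: a b rule: finite_induct)
  case empty
  then show ?case by (simp add: trinomial_prob_def)
next
  case (insert x A)
  define E where "E B a b = {f :: 'a \<Rightarrow> 'b. card {k \<in> B. f k \<in> U} = a \<and> card {k \<in> B. f k \<in> V} = b}"
    for B a b
  let ?T = "trinomial_prob (card A) (measure_pmf.prob P U) (measure_pmf.prob P V)"
  have preimage: "{f. f(x := y) \<in> E (insert x A) a b} =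
      (if y \<in> U then (if a = 0 then {} else E A (a - 1) b)
       else if y \<in> V then (if b = 0 then {} else E A a (b - 1))
       else E A a b)" for y
  proof -
    have "{f. f(x := y) \<in> E (insert x A) a b} = {f. of_bool (y \<in> U) + card {k \<in> A. f k \<in> U} = a
        \<and> of_bool (y \<in> V) + card {k \<in> A. f k \<in> V} = b}"
      by (simp only: E_def mem_Collect_eq card_fun_upd_in[OF insert.hyps])
    then show ?thesis
      using assms(2) by (auto simp: E_def)
  qed
  have "measure_pmf.prob (Pi_pmf (insert x A) d (\<lambda>_. P)) (E (insert x A) a b) =
      (\<integral>y. (if y \<in> U then (if a = 0 then 0 else ?T (a - 1) b)
            else if y \<in> V then (if b = 0 then 0 else ?T a (b - 1))
            else ?T a b) \<partial>P)"
    by (simp add: measure_Pi_pmf_insert[OF insert.hyps] preimage insert.IH[unfolded E_def[symmetric]]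
        if_distrib[of "measure_pmf.prob _"] cong: if_cong)
  also have "\<dots> = trinomial_prob (card (insert x A)) (measure_pmf.prob P U) (measure_pmf.prob P V) a b"
    using insert.hyps by (simp add: integral_pmf_three_valued[OF assms(2)] trinomial_prob_Suc)
  finally show ?case unfolding E_def .
qed

definition row_degree :: "nat \<Rightarrow> nat \<Rightarrow> (nat \<Rightarrow> nat \<times> real) \<Rightarrow> nat" where
  "row_degree K i \<omega> = card {k \<in> {..<K}. fst (\<omega> k) = i}"

lemma th_gram_entry:
  assumes signs: "\<And>k. k < K \<Longrightarrow> snd (\<omega> k) \<in> {-1, 1}" and "i < N" "j < N"
  shows "(th_matrix N K \<omega> * transpose_mat (th_matrix N K \<omega>)) $$ (i, j) =
         (if i = j then real (row_degree K i \<omega>) else 0)"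
proof -
  have "(th_matrix N K \<omega> * transpose_mat (th_matrix N K \<omega>)) $$ (i, j) =
      (\<Sum>k<K. if fst (\<omega> k) = i \<and> fst (\<omega> k) = j then snd (\<omega> k) ^ 2 else 0)"
    using assms(2,3)
    by (auto simp: th_matrix_def scalar_prod_def power2_eq_square lessThan_atLeast0 intro!: sum.cong)
  also have "\<dots> = (\<Sum>k<K. if i = j \<and> fst (\<omega> k) = i then 1 else 0)"
    using signs by (intro sum.cong refl) (fastforce simp: power2_eq_square)
  also have "\<dots> = (if i = j then real (row_degree K i \<omega>) else 0)"
    by (simp add: row_degree_def sum.If_cases Int_def)
  finally show ?thesis .
qed

lemma esd_th_gram:
  assumes "\<And>k. k < K \<Longrightarrow> snd (\<omega> k) \<in> {-1, 1}"
  shows "esd N (th_matrix N K \<omega> * transpose_mat (th_matrix N K \<omega>)) x =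
         (\<Sum>i<N. if real (row_degree K i \<omega>) \<le> x then 1 else 0) / real N"
proof -
  let ?G = "th_matrix N K \<omega> * transpose_mat (th_matrix N K \<omega>)"
  have G: "?G \<in> carrier_mat N N"
    by (intro mult_carrier_mat[of _ N K]) (auto simp: th_matrix_def)
  moreover have "upper_triangular ?G"
  proof
    fix i j assume "j < i" "i < dim_row ?G"
    then show "?G $$ (i, j) = 0"
      using G th_gram_entry[where K = K and \<omega> = \<omega>, OF assms, of i N j] by auto
  qed
  ultimately show ?thesis
    by (simp add: esd_upper_triangular th_gram_entry[where K = K and \<omega> = \<omega>, OF assms])
qed

lemma th_law_sign:
  assumes "0 < N" "\<omega> \<in> set_pmf (th_law N K)" "k < K"
  shows "snd (\<omega> k) \<in> {-1, 1}"
proof -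
  have "{0..<N} \<times> {-1, 1::real} \<noteq> {}"
    using assms(1) by auto
  then have "\<omega> \<in> PiE_dflt {..<K} (0, 1) (\<lambda>_. {0..<N} \<times> {-1, 1})"
    using assms(2) by (simp add: th_law_def set_Pi_pmf o_def)
  then show ?thesis
    using assms(3) by (auto simp: PiE_dflt_def)
qed

lemma prob_th_row_cell:
  assumes "i < N"
  shows "measure_pmf.prob (pmf_of_set ({0..<N} \<times> {-1, 1::real})) {y. fst y = i} = 1 / real N"
proof -
  have "({0..<N} \<times> {-1, 1::real}) \<inter> {y. fst y = i} = {i} \<times> {-1, 1}"
    using assms by auto
  moreover have "{0..<N} \<times> {-1, 1::real} \<noteq> {}"
    using assms by auto
  ultimately show ?thesis
    by (simp add: measure_pmf_of_set card_cartesian_product)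
qed

lemma prob_row_degree_eq:
  assumes "i < N"
  shows "measure_pmf.prob (th_law N K) {\<omega>. row_degree K i \<omega> = a} = trinomial_prob K (1 / real N) 0 a 0"
  using prob_Pi_pmf_cell_counts[of "{..<K}" "{y. fst y = i}" "{}" "(0, 1)"
      "pmf_of_set ({0..<N} \<times> {-1, 1::real})" a 0]
  unfolding prob_th_row_cell[OF assms] by (simp add: th_law_def row_degree_def)

lemma prob_row_degrees_eq:
  assumes "i < N" "j < N" "i \<noteq> j"
  shows "measure_pmf.prob (th_law N K) {\<omega>. row_degree K i \<omega> = a \<and> row_degree K j \<omega> = b}
       = trinomial_prob K (1 / real N) (1 / real N) a b"
  using prob_Pi_pmf_cell_counts[of "{..<K}" "{y. fst y = i}" "{y. fst y = j}" "(0, 1)"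
      "pmf_of_set ({0..<N} \<times> {-1, 1::real})" a b] assms(3)
  unfolding prob_th_row_cell[OF assms(1)] prob_th_row_cell[OF assms(2)]
  by (simp add: th_law_def row_degree_def disjoint_iff)

lemma prob_row_degree_in:
  assumes "i < N" "finite M"
  shows "measure_pmf.prob (th_law N K) {\<omega>. row_degree K i \<omega> \<in> M}
       = (\<Sum>a\<in>M. trinomial_prob K (1 / real N) 0 a 0)"
proof -
  have "measure_pmf.prob (th_law N K) {\<omega>. row_degree K i \<omega> \<in> M}
      = measure_pmf.prob (map_pmf (row_degree K i) (th_law N K)) M"
    by (simp add: vimage_def)
  also have "\<dots> = (\<Sum>a\<in>M. pmf (map_pmf (row_degree K i) (th_law N K)) a)"
    by (rule measure_measure_pmf_finite[OF assms(2)])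
  also have "\<dots> = (\<Sum>a\<in>M. trinomial_prob K (1 / real N) 0 a 0)"
    by (simp add: pmf_map vimage_def prob_row_degree_eq[OF assms(1)])
  finally show ?thesis .
qed

lemma prob_row_degrees_in:
  assumes "i < N" "j < N" "i \<noteq> j" "finite M"
  shows "measure_pmf.prob (th_law N K) {\<omega>. row_degree K i \<omega> \<in> M \<and> row_degree K j \<omega> \<in> M}
       = (\<Sum>(a, b)\<in>M \<times> M. trinomial_prob K (1 / real N) (1 / real N) a b)"
proof -
  let ?d = "\<lambda>\<omega>. (row_degree K i \<omega>, row_degree K j \<omega>)"
  have "measure_pmf.prob (th_law N K) {\<omega>. row_degree K i \<omega> \<in> M \<and> row_degree K j \<omega> \<in> M}
      = measure_pmf.prob (map_pmf ?d (th_law N K)) (M \<times> M)"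
    by (simp add: vimage_def)
  also have "\<dots> = (\<Sum>ab\<in>M \<times> M. pmf (map_pmf ?d (th_law N K)) ab)"
    using assms(4) by (intro measure_measure_pmf_finite) auto
  also have "\<dots> = (\<Sum>(a, b)\<in>M \<times> M. trinomial_prob K (1 / real N) (1 / real N) a b)"
    by (intro sum.cong refl)
      (auto simp: pmf_map vimage_def prob_row_degrees_eq[OF assms(1-3), symmetric])
  finally show ?thesis .
qed

lemma integrable_pmf_indicator [simp]: "integrable (measure_pmf \<mu>) (indicator A :: 'a \<Rightarrow> real)"
  by (rule measure_pmf.integrable_const_bound[where B = 1]) (auto simp: indicator_def)

lemma prob_mean_indicator_deviation_le:
  fixes \<mu> :: "'a pmf" and E :: "nat \<Rightarrow> 'a set"
  assumes "0 < N" "0 < \<epsilon>"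
    and p: "\<And>i. i < N \<Longrightarrow> measure_pmf.prob \<mu> (E i) = p"
    and q: "\<And>i j. i < N \<Longrightarrow> j < N \<Longrightarrow> i \<noteq> j \<Longrightarrow> measure_pmf.prob \<mu> (E i \<inter> E j) = q"
  shows "measure_pmf.prob \<mu> {\<omega>. \<epsilon> < \<bar>(\<Sum>i<N. indicator (E i) \<omega>) / real N - c\<bar>}
       \<le> (p / real N + (1 - 1 / real N) * q - 2 * c * p + c ^ 2) / \<epsilon> ^ 2"
proof -
  define S where "S \<omega> = (\<Sum>i<N. indicator (E i) \<omega> :: real)" for \<omega>
  have ES: "(\<integral>\<omega>. S \<omega> \<partial>\<mu>) = real N * p"
    using p by (simp add: S_def)
  have S2: "S \<omega> ^ 2 = (\<Sum>i<N. \<Sum>j<N. indicator (E i \<inter> E j) \<omega>)" for \<omega>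
    by (simp add: S_def power2_eq_square sum_product indicator_inter_arith)
  have integrable: "integrable \<mu> S" "integrable \<mu> (\<lambda>\<omega>. S \<omega> ^ 2)"
    by (simp add: S_def[abs_def]) (simp add: S2)
  have "(\<integral>\<omega>. S \<omega> ^ 2 \<partial>\<mu>) = (\<Sum>i<N. \<Sum>j<N. measure_pmf.prob \<mu> (E i \<inter> E j))"
    by (simp add: S2)
  also have "\<dots> = (\<Sum>i<N. p + (real N - 1) * q)"
  proof (intro sum.cong refl)
    fix i assume i: "i \<in> {..<N}"
    have "(\<Sum>j<N. measure_pmf.prob \<mu> (E i \<inter> E j)) = (\<Sum>j<N. q + (if i = j then p - q else 0))"
      using i p q by (intro sum.cong refl) auto
    also have "\<dots> = p + (real N - 1) * q"
      using i by (simp add: sum.distrib algebra_simps)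
    finally show "(\<Sum>j<N. measure_pmf.prob \<mu> (E i \<inter> E j)) = p + (real N - 1) * q" .
  qed
  finally have ES2: "(\<integral>\<omega>. S \<omega> ^ 2 \<partial>\<mu>) = real N * (p + (real N - 1) * q)"
    by simp
  define F where "F \<omega> = S \<omega> / real N - c" for \<omega>
  have F2: "(\<lambda>\<omega>. F \<omega> ^ 2) = (\<lambda>\<omega>. S \<omega> ^ 2 / real N ^ 2 - 2 * c / real N * S \<omega> + c ^ 2)"
    using assms(1) by (auto simp: F_def power2_eq_square field_simps)
  then have integrable_F2: "integrable \<mu> (\<lambda>\<omega>. F \<omega> ^ 2)"
    by (simp add: integrable)
  have "(\<integral>\<omega>. F \<omega> ^ 2 \<partial>\<mu>) = real N * (p + (real N - 1) * q) / real N ^ 2 - 2 * c / real N * (real N * p) + c ^ 2"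
    by (simp add: F2 integrable ES ES2)
  also have "\<dots> = p / real N + (1 - 1 / real N) * q - 2 * c * p + c ^ 2"
    using assms(1) by (simp add: power2_eq_square field_simps)
  finally have EF2: "(\<integral>\<omega>. F \<omega> ^ 2 \<partial>\<mu>) = p / real N + (1 - 1 / real N) * q - 2 * c * p + c ^ 2" .
  have "measure_pmf.prob \<mu> {\<omega>. \<epsilon> < \<bar>F \<omega>\<bar>} \<le> measure_pmf.prob \<mu> {\<omega>. \<epsilon> \<le> \<bar>F \<omega>\<bar>}"
    by (intro measure_pmf.finite_measure_mono) auto
  also have "\<dots> \<le> (\<integral>\<omega>. F \<omega> ^ 2 \<partial>\<mu>) / \<epsilon> ^ 2"
    using measure_pmf.second_moment_method[OF _ integrable_F2 assms(2)] by simp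
  finally show ?thesis
    unfolding EF2 by (simp add: F_def S_def)
qed

lemma finite_nat_le_real: "finite {a::nat. real a \<le> x}"
  by (rule finite_subset[of _ "{..nat \<lceil>x\<rceil>}"]) (auto simp: le_nat_iff le_ceiling_iff)

lemma prob_th_esd_deviation_le:
  fixes N K :: nat and x c \<epsilon> :: real
  assumes "0 < N" "0 < \<epsilon>"
  defines "p \<equiv> (\<Sum>a | real a \<le> x. trinomial_prob K (1 / real N) 0 a 0)"
    and "q \<equiv> (\<Sum>(a, b) \<in> {a. real a \<le> x} \<times> {a. real a \<le> x}. trinomial_prob K (1 / real N) (1 / real N) a b)"
  shows "measure_pmf.prob (th_law N K)
           {\<omega>. \<epsilon> < \<bar>esd N (th_matrix N K \<omega> * transpose_mat (th_matrix N K \<omega>)) x - c\<bar>}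
       \<le> (p / real N + (1 - 1 / real N) * q - 2 * c * p + c ^ 2) / \<epsilon> ^ 2"
proof -
  define E where "E i = {\<omega>. real (row_degree K i \<omega>) \<le> x}" for i
  have "AE \<omega> in th_law N K. esd N (th_matrix N K \<omega> * transpose_mat (th_matrix N K \<omega>)) x
      = (\<Sum>i<N. indicator (E i) \<omega>) / real N"
  proof (rule AE_pmfI)
    fix \<omega> assume "\<omega> \<in> set_pmf (th_law N K)"
    then have "esd N (th_matrix N K \<omega> * transpose_mat (th_matrix N K \<omega>)) x =
        (\<Sum>i<N. if real (row_degree K i \<omega>) \<le> x then 1 else 0) / real N"
      using th_law_sign[OF assms(1)] by (intro esd_th_gram)
    then show "esd N (th_matrix N K \<omega> * transpose_mat (th_matrix N K \<omega>)) x
        = (\<Sum>i<N. indicator (E i) \<omega>) / real N"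
      by (simp add: E_def indicator_def of_bool_def[symmetric])
  qed
  then have "measure_pmf.prob (th_law N K)
           {\<omega>. \<epsilon> < \<bar>esd N (th_matrix N K \<omega> * transpose_mat (th_matrix N K \<omega>)) x - c\<bar>}
      = measure_pmf.prob (th_law N K) {\<omega>. \<epsilon> < \<bar>(\<Sum>i<N. indicator (E i) \<omega>) / real N - c\<bar>}"
    by (intro measure_eq_AE) auto
  also have "\<dots> \<le> (p / real N + (1 - 1 / real N) * q - 2 * c * p + c ^ 2) / \<epsilon> ^ 2"
  proof (rule prob_mean_indicator_deviation_le[OF assms(1,2)])
    show "measure_pmf.prob (th_law N K) (E i) = p" if "i < N" for i
      using prob_row_degree_in[OF that finite_nat_le_real] by (simp add: E_def p_def)
    show "measure_pmf.prob (th_law N K) (E i \<inter> E j) = q" if "i < N" "j < N" "i \<noteq> j" for i j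
      using prob_row_degrees_in[OF that finite_nat_le_real] by (simp add: E_def q_def Int_def)
  qed
  finally show ?thesis .
qed

lemma poisson_cdf_eq_sum: "poisson_cdf \<beta> x = (\<Sum>a | real a \<le> x. \<beta> ^ a * exp (- \<beta>) / fact a)"
  unfolding poisson_cdf_def
  by (subst suminf_finite[OF finite_nat_le_real]) (auto intro: sum.mono_neutral_cong_right)

context
  fixes \<beta> :: real and K :: "nat \<Rightarrow> nat"
  assumes \<beta>_pos: "0 < \<beta>" and K_ratio: "(\<lambda>N. real (K N) / real N) \<longlonglongrightarrow> \<beta>"
begin

lemma filterlim_K_at_top: "filterlim (\<lambda>N. real (K N)) at_top sequentially"
proof -
  have "filterlim (\<lambda>N. real (K N) / real N * real N) at_top sequentially"
    by (rule filterlim_tendsto_pos_mult_at_top[OF K_ratio \<beta>_pos filterlim_real_sequentially])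
  moreover have "eventually (\<lambda>N. real (K N) / real N * real N = real (K N)) sequentially"
    using eventually_gt_at_top[of 0] by eventually_elim simp
  ultimately show ?thesis
    using filterlim_cong by fastforce
qed

lemma tendsto_gchoose_div_power: "(\<lambda>N. ((real (K N) - s) gchoose b) / real N ^ b) \<longlonglongrightarrow> \<beta> ^ b / fact b"
proof -
  have "(\<lambda>N. (\<Prod>i<b. real (K N) / real N - (s + real i) / real N) / fact b)
      \<longlonglongrightarrow> (\<Prod>i<b. \<beta> - 0) / fact b"
    by (intro tendsto_intros K_ratio) auto
  moreover have "eventually (\<lambda>N. (\<Prod>i<b. real (K N) / real N - (s + real i) / real N) / fact b
      = ((real (K N) - s) gchoose b) / real N ^ b) sequentially"
    using eventually_gt_at_top[of 0]
  proof eventually_elim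
    case (elim N)
    have "(\<Prod>i<b. real (K N) / real N - (s + real i) / real N) = (\<Prod>i<b. (real (K N) - s - real i) / real N)"
      using elim by (intro prod.cong refl) (simp add: field_simps)
    then show ?case
      by (simp add: gbinomial_prod_rev atLeast0LessThan prod_dividef)
  qed
  ultimately show ?thesis
    by (simp add: tendsto_cong)
qed

lemma tendsto_one_minus_div_power: "(\<lambda>N. (1 - c / real N) ^ K N) \<longlonglongrightarrow> exp (- c * \<beta>)"
proof -
  have "(\<lambda>N. ((1 + (- c) / real N) ^ N) powr (real (K N) / real N)) \<longlonglongrightarrow> exp (- c) powr \<beta>"
    by (rule tendsto_powr[OF tendsto_exp_limit_sequentially K_ratio]) simp
  moreover have "eventually (\<lambda>N. ((1 + (- c) / real N) ^ N) powr (real (K N) / real N)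
      = (1 - c / real N) ^ K N) sequentially"
    using eventually_gt_at_top[of "nat \<lceil>\<bar>c\<bar>\<rceil>"]
  proof eventually_elim
    case (elim N)
    then have "\<bar>c\<bar> < real N"
      by linarith
    then have "0 < 1 + (- c) / real N" "0 < real N"
      by (auto simp: field_simps abs_less_iff)
    then show ?case
      by (simp add: powr_realpow [symmetric] powr_powr)
  qed
  ultimately show ?thesis
    by (simp add: tendsto_cong exp_powr_real)
qed

lemma tendsto_trinomial_prob_poisson:
  "(\<lambda>N. trinomial_prob (K N) (u / real N) (v / real N) a b)
     \<longlonglongrightarrow> (u * \<beta>) ^ a / fact a * ((v * \<beta>) ^ b / fact b) * exp (- (u + v) * \<beta>)"
proof -
  define w where "w = u + v"
  let ?h = "\<lambda>N. u ^ a * (((real (K N) - 0) gchoose a) / real N ^ a)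
      * (v ^ b * (((real (K N) - real a) gchoose b) / real N ^ b))
      * ((1 - w / real N) ^ K N / (1 - w / real N) ^ (a + b))"
  have "?h \<longlonglongrightarrow> u ^ a * (\<beta> ^ a / fact a) * (v ^ b * (\<beta> ^ b / fact b)) * (exp (- w * \<beta>) / (1 - 0) ^ (a + b))"
    by (intro tendsto_intros tendsto_gchoose_div_power tendsto_one_minus_div_power lim_const_over_n) simp
  moreover have "eventually (\<lambda>N. ?h N = trinomial_prob (K N) (u / real N) (v / real N) a b) sequentially"
    using filterlim_K_at_top[unfolded filterlim_at_top, rule_format, of "real (a + b)"]
      eventually_gt_at_top[of "nat \<lceil>\<bar>w\<bar>\<rceil>"]
  proof eventually_elim
    case (elim N)
    then have "\<bar>w\<bar> < real N" "a + b \<le> K N"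
      by linarith+
    then have "1 - w / real N \<noteq> 0"
      by (auto simp: field_simps abs_less_iff)
    then have "(1 - u / real N - v / real N) ^ (K N - a - b) = (1 - w / real N) ^ K N / (1 - w / real N) ^ (a + b)"
      using \<open>a + b \<le> K N\<close> by (simp add: power_diff diff_diff_left w_def add_divide_distrib diff_diff_eq)
    moreover have "real (K N choose a) = (real (K N) - 0) gchoose a"
      "real ((K N - a) choose b) = (real (K N) - real a) gchoose b"
      using \<open>a + b \<le> K N\<close> by (simp_all add: binomial_gbinomial of_nat_diff)
    ultimately show ?case
      by (simp add: trinomial_prob_def power_divide)
  qed
  ultimately show ?thesis
    by (simp add: tendsto_cong w_def power_mult_distrib)
qed

lemma tendsto_prob_row_degree_le:
  "(\<lambda>N. \<Sum>a | real a \<le> x. trinomial_prob (K N) (1 / real N) 0 a 0) \<longlonglongrightarrow> poisson_cdf \<beta> x"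
  unfolding poisson_cdf_eq_sum
  using tendsto_trinomial_prob_poisson[of 1 0 _ 0]
  by (intro tendsto_sum) simp

lemma tendsto_prob_row_degrees_le:
  "(\<lambda>N. \<Sum>(a, b) \<in> {a. real a \<le> x} \<times> {a. real a \<le> x}. trinomial_prob (K N) (1 / real N) (1 / real N) a b)
     \<longlonglongrightarrow> poisson_cdf \<beta> x ^ 2"
proof -
  have "poisson_cdf \<beta> x ^ 2 =
      (\<Sum>(a, b) \<in> {a. real a \<le> x} \<times> {a. real a \<le> x}. \<beta> ^ a / fact a * (\<beta> ^ b / fact b) * exp (- 2 * \<beta>))"
    by (simp add: poisson_cdf_eq_sum power2_eq_square sum_product sum.cartesian_product
        mult_exp_exp field_simps)
  then show ?thesis
    using tendsto_trinomial_prob_poisson[of 1 1]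
    by (simp add: case_prod_beta tendsto_sum)
qed

end

theorem corollary1:
  fixes \<beta> :: real and K :: "nat \<Rightarrow> nat" and x :: real
  assumes "\<beta> > 0"
    and "\<And>N. N \<ge> 1 \<Longrightarrow> K N \<ge> 1"
    and "(\<lambda>N. real (K N) / real N) \<longlonglongrightarrow> \<beta>"
  shows "\<forall>\<epsilon>>0. (\<lambda>N. measure_pmf.prob (th_law N (K N))
            {\<omega>. \<bar>esd N (th_matrix N (K N) \<omega> * transpose_mat (th_matrix N (K N) \<omega>)) x
                  - poisson_cdf \<beta> x\<bar> > \<epsilon>}) \<longlonglongrightarrow> 0"
proof (intro allI impI)
  fix \<epsilon> :: real assume "\<epsilon> > 0"
  define c where "c = poisson_cdf \<beta> x"
  define p where "p N = (\<Sum>a | real a \<le> x. trinomial_prob (K N) (1 / real N) 0 a 0)" for N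
  define q where "q N = (\<Sum>(a, b) \<in> {a. real a \<le> x} \<times> {a. real a \<le> x}.
      trinomial_prob (K N) (1 / real N) (1 / real N) a b)" for N
  have "p \<longlonglongrightarrow> c" "q \<longlonglongrightarrow> c ^ 2"
    unfolding p_def[abs_def] q_def[abs_def] c_def
    using tendsto_prob_row_degree_le tendsto_prob_row_degrees_le assms(1,3) by auto
  then have "(\<lambda>N. (p N / real N + (1 - 1 / real N) * q N - 2 * c * p N + c ^ 2) / \<epsilon> ^ 2)
      \<longlonglongrightarrow> (0 + (1 - 0) * c ^ 2 - 2 * c * c + c ^ 2) / \<epsilon> ^ 2"
    by (intro tendsto_intros lim_1_over_n
        tendsto_divide_0[OF _ filterlim_at_top_imp_at_infinity[OF filterlim_real_sequentially]])
      (use \<open>\<epsilon> > 0\<close> in auto)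
  then have bound: "(\<lambda>N. (p N / real N + (1 - 1 / real N) * q N - 2 * c * p N + c ^ 2) / \<epsilon> ^ 2)
      \<longlonglongrightarrow> 0"
    by (simp add: power2_eq_square)
  have "eventually (\<lambda>N. measure_pmf.prob (th_law N (K N))
      {\<omega>. \<epsilon> < \<bar>esd N (th_matrix N (K N) \<omega> * transpose_mat (th_matrix N (K N) \<omega>)) x - c\<bar>}
      \<le> (p N / real N + (1 - 1 / real N) * q N - 2 * c * p N + c ^ 2) / \<epsilon> ^ 2) sequentially"
    using eventually_gt_at_top[of 0]
    by eventually_elim (unfold p_def q_def, rule prob_th_esd_deviation_le[OF _ \<open>\<epsilon> > 0\<close>])
  from tendsto_sandwich[OF _ this tendsto_const bound]
  show "(\<lambda>N. measure_pmf.prob (th_law N (K N))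
      {\<omega>. \<bar>esd N (th_matrix N (K N) \<omega> * transpose_mat (th_matrix N (K N) \<omega>)) x
            - poisson_cdf \<beta> x\<bar> > \<epsilon>}) \<longlonglongrightarrow> 0"
    by (simp add: c_def)
qed

end
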